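(* Let $\mathbf A\in\mathbb R^{d_1\times N_1}$ be a random matrix whose columns $\mathbf a_1,\dots,\mathbf a_{N_1}$ are uniformly distributed on $\mathbb S^{d_1-1}$, let $\mathbf y\in\mathbb R^{d_2}$ be uniformly distributed on $\mathbb S^{d_2-1}$, independent of $\mathbf A$, and let $\boldsymbol\Sigma\in\mathbb R^{d_1\times d_2}$ be a deterministic matrix. Then for every $t>0$, with probability at least $1-2e^{-t}$, \[ \mathbf a_i^\top\boldsymbol\Sigma\mathbf y\ \le\ \frac{2\sqrt{t\log N_1+t^2}\,\|\boldsymbol\Sigma\|_F}{\sqrt{d_1}}\quad\text{for all } i=1,\dots,N_1. \]
   Context: $\mathbb S^{m-1}$ denotes the unit sphere of $\mathbb R^m$; $\|\cdot\|_F$ is the Frobenius norm. *)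

theory Defs
  imports "HOL-Probability.Probability"
begin

text \<open>Uniform distribution on the unit sphere of a Euclidean space: the image of the
  uniform distribution on the open unit ball under radial projection x \<mapsto> x / |x|
  (equivalently, the normalized surface measure on the sphere).\<close>
definition uniform_sphere :: "('a::euclidean_space) measure" where
  "uniform_sphere = distr (uniform_measure lborel (ball 0 1)) borel (\<lambda>x. x /\<^sub>R norm x)"

definition frob_norm :: "real^'m^'n \<Rightarrow> real" where
  "frob_norm M = sqrt (\<Sum>i\<in>UNIV. \<Sum>j\<in>UNIV. (M $ i $ j)^2)"

end

theory Submission
  imports Defs
begin

text \<open>For fixed \<open>y\<close> with \<open>|y| \<le> 1\<close> we have \<open>|\<Sigma> y| \<le> \<parallel>\<Sigma>\<parallel>\<^sub>F\<close>, so the event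
  \<open>a\<^sup>T \<Sigma> y > B\<close> lies in a spherical cap \<open>{a. a \<bullet> u > z}\<close> of height \<open>z \<ge> B / \<parallel>\<Sigma>\<parallel>\<^sub>F\<close>.
  Through radial projection, such a cap has the same measure as the cone it spans inside the
  unit ball, relative to the volume of the ball; this cone fits into a ball of radius
  \<open>exp (-3 z\<^sup>2 / 8)\<close>, which bounds the cap by \<open>exp (-3 d z\<^sup>2 / 8)\<close>. For the chosen threshold
  this is \<open>exp (-3 (t log N + t\<^sup>2) / 2)\<close>; Fubini turns it into a bound on each joint event
  \<open>a\<^sub>i\<^sup>T \<Sigma> y > B\<close>, and the union bound over the \<open>N\<close> columns gives at most \<open>e\<^sup>-\<^sup>t\<close> once
  \<open>t \<ge> 2/3\<close>. For \<open>t \<le> log 2\<close> the claim is trivial.\<close>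

lemma inverse_four_le_exp:
  fixes w :: real
  assumes "1/2 \<le> w" "w \<le> 1"
  shows "1 / (4 * w) \<le> exp (-(3/4) * w)"
proof -
  have "0 \<le> (3 * w - 1) * (1 - w)"
    using assms by (intro mult_nonneg_nonneg) auto
  then have "1 / (4 * w) \<le> 1 - 3/4 * w"
    using assms by (simp add: field_simps algebra_simps)
  also have "\<dots> \<le> exp (-(3/4) * w)"
    using exp_ge_add_one_self[of "-(3/4) * w"] by simp
  finally show ?thesis .
qed

lemma power2_dist_scaleR_unit:
  fixes u x :: "'a::real_inner"
  assumes "norm u = 1"
  shows "(dist (c *\<^sub>R u) x)\<^sup>2 = (norm x)\<^sup>2 - 2 * c * (x \<bullet> u) + c\<^sup>2"
proof -
  have "(dist (c *\<^sub>R u) x)\<^sup>2 = c * c * (u \<bullet> u) - 2 * c * (x \<bullet> u) + x \<bullet> x"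
    by (simp add: dist_norm power2_norm_eq_inner inner_diff_left inner_diff_right
        inner_commute algebra_simps)
  then show ?thesis
    using assms by (simp add: dot_square_norm power2_norm_eq_inner[symmetric] power2_eq_square)
qed

lemma cone_cap_subset_cball_near:
  fixes u :: "'a::real_inner"
  assumes u: "norm u = 1" and z: "0 \<le> z" "z\<^sup>2 \<le> 1/2"
  shows "{x. norm x \<le> 1 \<and> z * norm x < x \<bullet> u} \<subseteq> cball (z *\<^sub>R u) (sqrt (1 - z\<^sup>2))"
proof
  fix x :: 'a
  assume "x \<in> {x. norm x \<le> 1 \<and> z * norm x < x \<bullet> u}"
  then have x1: "norm x \<le> 1" and xu: "z * norm x < x \<bullet> u" by auto
  have "(dist (z *\<^sub>R u) x)\<^sup>2 = (norm x)\<^sup>2 - 2 * z * (x \<bullet> u) + z\<^sup>2"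
    by (rule power2_dist_scaleR_unit[OF u])
  also have "\<dots> \<le> (norm x)\<^sup>2 - 2 * z\<^sup>2 * norm x + z\<^sup>2"
    using mult_left_mono[OF less_imp_le[OF xu] z(1)] by (simp add: power2_eq_square algebra_simps)
  also have "\<dots> \<le> 1 - z\<^sup>2"
  proof -
    have "(norm x - 1) * (norm x + 1 - 2 * z\<^sup>2) \<le> 0"
      using x1 z norm_ge_zero[of x] by (intro mult_nonpos_nonneg) linarith+
    then show ?thesis by (simp add: algebra_simps power2_eq_square)
  qed
  finally show "x \<in> cball (z *\<^sub>R u) (sqrt (1 - z\<^sup>2))"
    by (simp add: mem_cball real_le_rsqrt)
qed

lemma cone_cap_subset_cball_far:
  fixes u :: "'a::real_inner"
  assumes u: "norm u = 1" and z: "0 < z"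
  shows "{x. norm x \<le> 1 \<and> z * norm x < x \<bullet> u} \<subseteq> cball ((1 / (2 * z)) *\<^sub>R u) (1 / (2 * z))"
proof
  fix x :: 'a
  assume "x \<in> {x. norm x \<le> 1 \<and> z * norm x < x \<bullet> u}"
  then have x1: "norm x \<le> 1" and xu: "z * norm x < x \<bullet> u" by auto
  have "(dist ((1 / (2 * z)) *\<^sub>R u) x)\<^sup>2 = (norm x)\<^sup>2 - (x \<bullet> u) / z + (1 / (2 * z))\<^sup>2"
    using power2_dist_scaleR_unit[OF u, of "1 / (2 * z)" x] z by simp
  also have "\<dots> \<le> (norm x)\<^sup>2 - norm x + (1 / (2 * z))\<^sup>2"
  proof -
    have "norm x \<le> (x \<bullet> u) / z"
      using xu z by (simp add: pos_le_divide_eq mult.commute)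
    then show ?thesis by linarith
  qed
  also have "\<dots> \<le> (1 / (2 * z))\<^sup>2"
    using x1 mult_nonneg_nonpos[OF norm_ge_zero[of x], of "norm x - 1"]
    by (simp add: algebra_simps power2_eq_square)
  finally have "dist ((1 / (2 * z)) *\<^sub>R u) x \<le> 1 / (2 * z)"
    by (rule power2_le_imp_le) (use z in simp)
  then show "x \<in> cball ((1 / (2 * z)) *\<^sub>R u) (1 / (2 * z))"
    by (simp add: mem_cball)
qed

lemma cone_cap_subset_small_cball:
  fixes u :: "'a::real_inner"
  assumes u: "norm u = 1" and z: "0 \<le> z" "z < 1"
  obtains c r where "0 \<le> r" "r \<le> exp (-(3/8) * z\<^sup>2)"
    "{x. norm x \<le> 1 \<and> z * norm x < x \<bullet> u} \<subseteq> cball c r"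
proof -
  have exp_sq: "exp (-(3/4) * z\<^sup>2) = (exp (-(3/8) * z\<^sup>2))\<^sup>2"
    by (simp add: power2_eq_square flip: exp_add)
  show thesis
  proof (cases "z\<^sup>2 \<le> 1/2")
    case True
    have "(sqrt (1 - z\<^sup>2))\<^sup>2 = 1 - z\<^sup>2" using True by simp
    also have "\<dots> \<le> exp (-(z\<^sup>2))" using exp_ge_add_one_self[of "-(z\<^sup>2)"] by simp
    also have "\<dots> \<le> (exp (-(3/8) * z\<^sup>2))\<^sup>2" unfolding exp_sq[symmetric] by simp
    finally have "sqrt (1 - z\<^sup>2) \<le> exp (-(3/8) * z\<^sup>2)"
      by (rule power2_le_imp_le) simp
    moreover have "0 \<le> sqrt (1 - z\<^sup>2)"
      using True by simp
    ultimately show thesis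
      using that cone_cap_subset_cball_near[OF u z(1) True] by blast
  next
    case False
    then have z0: "0 < z" using z by (cases "z = 0") auto
    have "(1 / (2 * z))\<^sup>2 = 1 / (4 * z\<^sup>2)" by (simp add: power2_eq_square)
    also have "\<dots> \<le> exp (-(3/4) * z\<^sup>2)"
      using inverse_four_le_exp[of "z\<^sup>2"] False z by (simp add: power_le_one)
    also have "\<dots> = (exp (-(3/8) * z\<^sup>2))\<^sup>2"
      by (rule exp_sq)
    finally have "1 / (2 * z) \<le> exp (-(3/8) * z\<^sup>2)"
      by (rule power2_le_imp_le) simp
    moreover have "0 \<le> 1 / (2 * z)"
      using z0 by simp
    ultimately show thesis
      using that cone_cap_subset_cball_far[OF u z0] by blast
  qed
qed

lemma borel_measurable_normalize[measurable]:
  "(\<lambda>x::'a::euclidean_space. x /\<^sub>R norm x) \<in> borel_measurable borel"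
  by measurable

lemma sets_uniform_sphere[measurable_cong, simp]:
  "sets (uniform_sphere :: 'a::euclidean_space measure) = sets borel"
  by (simp add: uniform_sphere_def)

lemma space_uniform_sphere[simp]: "space (uniform_sphere :: 'a::euclidean_space measure) = UNIV"
  by (simp add: uniform_sphere_def)

lemma prob_space_uniform_sphere: "prob_space (uniform_sphere :: 'a::euclidean_space measure)"
proof -
  have "prob_space (uniform_measure lborel (ball (0::'a) 1))"
  proof (rule prob_space_uniform_measure)
    have "0 < unit_ball_vol (real DIM('a))" by simp
    then show "emeasure lborel (ball (0::'a) 1) \<noteq> 0"
      by (simp add: emeasure_ball del: unit_ball_vol_pos)
  qed (simp add: emeasure_ball)
  then show ?thesis
    unfolding uniform_sphere_def by (rule prob_space.prob_space_distr) measurable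
qed

lemma AE_uniform_sphere_norm_le_1:
  "AE y in (uniform_sphere :: 'a::euclidean_space measure). norm y \<le> 1"
proof -
  have "norm (x /\<^sub>R norm x) \<le> 1" for x :: 'a by (cases "x = 0") auto
  then show ?thesis
    unfolding uniform_sphere_def by (subst AE_distr_iff) (auto simp del: norm_scaleR)
qed

lemma emeasure_uniform_sphere:
  assumes "A \<in> sets borel"
  shows "emeasure (uniform_sphere :: 'a::euclidean_space measure) A
    = emeasure lborel (ball 0 1 \<inter> (\<lambda>x. x /\<^sub>R norm x) -` A) / ennreal (unit_ball_vol DIM('a))"
proof -
  have "(\<lambda>x::'a. x /\<^sub>R norm x) -` A \<in> sets lborel"
    using measurable_sets[OF borel_measurable_normalize assms] by simp
  then show ?thesis
    unfolding uniform_sphere_def using assms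
    by (subst emeasure_distr) (auto simp: emeasure_ball Int_commute)
qed

lemma emeasure_uniform_sphere_cap_le:
  fixes u :: "'a::euclidean_space"
  assumes u: "norm u = 1" and z: "0 \<le> z"
  shows "emeasure (uniform_sphere :: 'a measure) {a. z < a \<bullet> u}
    \<le> ennreal (exp (-(3/8) * real DIM('a) * z\<^sup>2))"
proof -
  define V where "V = unit_ball_vol (real DIM('a))"
  have V: "0 < V" unfolding V_def by simp
  have cone: "ball 0 1 \<inter> (\<lambda>x. x /\<^sub>R norm x) -` {a. z < a \<bullet> u}
      \<subseteq> {x. norm x \<le> 1 \<and> z * norm x < x \<bullet> u}"
  proof
    fix x :: 'a assume "x \<in> ball 0 1 \<inter> (\<lambda>x. x /\<^sub>R norm x) -` {a. z < a \<bullet> u}"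
    then have "norm x < 1" and xu: "z < (x /\<^sub>R norm x) \<bullet> u" by auto
    moreover from xu z have "x \<noteq> 0" by auto
    ultimately show "x \<in> {x. norm x \<le> 1 \<and> z * norm x < x \<bullet> u}"
      by (simp add: field_simps)
  qed
  have meas: "emeasure uniform_sphere {a. z < a \<bullet> u}
      = emeasure lborel (ball 0 1 \<inter> (\<lambda>x. x /\<^sub>R norm x) -` {a. z < a \<bullet> u}) / ennreal V"
    unfolding V_def by (rule emeasure_uniform_sphere) measurable
  show ?thesis
  proof (cases "z < 1")
    case False
    have "x \<bullet> u \<le> z * norm x" for x :: 'a
      using norm_cauchy_schwarz[of x u] u mult_right_mono[of 1 z "norm x"] False by simp
    then have "{x. norm x \<le> 1 \<and> z * norm x < x \<bullet> u} = {}"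
      by (auto simp: not_less)
    with cone meas show ?thesis by auto
  next
    case True
    obtain c r where r: "0 \<le> r" "r \<le> exp (-(3/8) * z\<^sup>2)"
      and cov: "{x. norm x \<le> 1 \<and> z * norm x < x \<bullet> u} \<subseteq> cball c r"
      using cone_cap_subset_small_cball[OF u z True] .
    have "emeasure lborel (ball 0 1 \<inter> (\<lambda>x. x /\<^sub>R norm x) -` {a. z < a \<bullet> u})
        \<le> emeasure lborel (cball c r)"
      using cone cov by (intro emeasure_mono) auto
    also have "\<dots> = ennreal (V * r ^ DIM('a))"
      unfolding V_def using r(1) by (rule emeasure_cball)
    finally have "emeasure uniform_sphere {a. z < a \<bullet> u} \<le> ennreal (V * r ^ DIM('a)) / ennreal V"
      unfolding meas by (rule divide_right_mono_ennreal)
    also have "\<dots> = ennreal (r ^ DIM('a))"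
      using V r by (simp add: divide_ennreal)
    also have "\<dots> \<le> ennreal (exp (-(3/8) * z\<^sup>2) ^ DIM('a))"
      using r by (intro ennreal_leI power_mono) auto
    also have "exp (-(3/8) * z\<^sup>2) ^ DIM('a) = exp (-(3/8) * real DIM('a) * z\<^sup>2)"
      by (simp add: exp_of_nat_mult[symmetric] algebra_simps)
    finally show ?thesis .
  qed
qed

lemma emeasure_uniform_sphere_inner_gt_le:
  fixes v :: "'a::euclidean_space"
  assumes v: "norm v \<le> F" and K: "0 \<le> K"
  shows "emeasure (uniform_sphere :: 'a measure) {a. 2 * sqrt K * F / sqrt (real DIM('a)) < a \<bullet> v}
    \<le> ennreal (exp (-(3/2) * K))"
proof -
  define B where "B = 2 * sqrt K * F / sqrt (real DIM('a))"
  have "0 \<le> F"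
    using v norm_ge_zero[of v] by linarith
  then have B: "0 \<le> B"
    unfolding B_def using K by simp
  show ?thesis
  proof (cases "v = 0")
    case True
    then show ?thesis using B by (simp add: B_def[symmetric] not_less)
  next
    case False
    then have nv: "0 < norm v" by simp
    have "{a. B < a \<bullet> v} = {a. B / norm v < a \<bullet> (v /\<^sub>R norm v)}"
      using nv by (auto simp: field_simps)
    then have "emeasure uniform_sphere {a. B < a \<bullet> v}
        \<le> ennreal (exp (-(3/8) * real DIM('a) * (B / norm v)\<^sup>2))"
      using emeasure_uniform_sphere_cap_le[of "v /\<^sub>R norm v" "B / norm v"] nv B by simp
    also have "\<dots> \<le> ennreal (exp (-(3/2) * K))"
    proof (intro ennreal_leI exp_mono)
      have "real DIM('a) * (B / norm v)\<^sup>2 = 4 * K * F\<^sup>2 / (norm v)\<^sup>2"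
        unfolding B_def using K by (simp add: power_divide power_mult_distrib)
      also have "\<dots> \<ge> 4 * K"
        using nv v K by (simp add: pos_le_divide_eq mult_left_mono power_mono)
      finally show "-(3/8) * real DIM('a) * (B / norm v)\<^sup>2 \<le> -(3/2) * K" by linarith
    qed
    finally show ?thesis unfolding B_def .
  qed
qed

lemma frob_norm_nonneg: "0 \<le> frob_norm S"
  by (simp add: frob_norm_def sum_nonneg)

lemma norm_matrix_vector_mult_le_frob_norm:
  fixes S :: "real^'m^'n" and y :: "real^'m"
  shows "norm (S *v y) \<le> frob_norm S * norm y"
proof -
  have row: "(S *v y) $ i = S $ i \<bullet> y" for i
    by (simp add: matrix_vector_mult_def inner_vec_def)
  have "(norm (S *v y))\<^sup>2 = (\<Sum>i\<in>UNIV. ((S $ i) \<bullet> y)\<^sup>2)"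
    unfolding power2_norm_eq_inner by (simp add: inner_vec_def power2_eq_square row)
  also have "\<dots> \<le> (\<Sum>i\<in>UNIV. (norm (S $ i))\<^sup>2 * (norm y)\<^sup>2)"
  proof (rule sum_mono)
    fix i
    have "\<bar>(S $ i) \<bullet> y\<bar>\<^sup>2 \<le> (norm (S $ i) * norm y)\<^sup>2"
      using Cauchy_Schwarz_ineq2 by (intro power_mono) auto
    then show "((S $ i) \<bullet> y)\<^sup>2 \<le> (norm (S $ i))\<^sup>2 * (norm y)\<^sup>2"
      by (simp add: power_mult_distrib)
  qed
  also have "\<dots> = (frob_norm S * norm y)\<^sup>2"
  proof -
    have "(norm (S $ i))\<^sup>2 = (\<Sum>j\<in>UNIV. (S $ i $ j)\<^sup>2)" for i
      unfolding power2_norm_eq_inner by (simp add: inner_vec_def power2_eq_square)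
    then show ?thesis
      by (simp add: frob_norm_def sum_distrib_right sum_nonneg power_mult_distrib)
  qed
  finally show ?thesis
    by (rule power2_le_imp_le) (simp add: frob_norm_nonneg)
qed

lemma matrix_vector_mult_measurable[measurable]:
  "(\<lambda>y. (A::real^'m^'k) *v y) \<in> borel_measurable borel"
  by (intro borel_measurable_continuous_onI linear_continuous_on matrix_vector_mul_bounded_linear)

lemma measurable_PiM_pair_coordinate[measurable]:
  "i \<in> I \<Longrightarrow> (\<lambda>\<omega>. (fst \<omega> i, snd \<omega>)) \<in> PiM I (\<lambda>_. M1) \<Otimes>\<^sub>M M2 \<rightarrow>\<^sub>M M1 \<Otimes>\<^sub>M M2"
  by measurable

lemma emeasure_PiM_pair_coordinate_le:
  assumes M1: "prob_space M1" and M2: "prob_space M2" and i: "i \<in> I"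
    and C: "C \<in> sets (M1 \<Otimes>\<^sub>M M2)"
    and bound: "AE y in M2. emeasure M1 ((\<lambda>a. (a, y)) -` C) \<le> q"
  defines "M \<equiv> PiM I (\<lambda>_. M1) \<Otimes>\<^sub>M M2"
  shows "emeasure M {\<omega> \<in> space M. (fst \<omega> i, snd \<omega>) \<in> C} \<le> q"
proof -
  interpret P: product_prob_space "\<lambda>_. M1" I
    by (rule product_prob_spaceI) (rule M1)
  interpret PM: pair_prob_space "PiM I (\<lambda>_. M1)" M2
    using prob_space_PiM[OF M1, of I] M2
    by (simp add: pair_prob_space_def pair_sigma_finite_def prob_space_imp_sigma_finite)
  from measurable_sets[OF measurable_PiM_pair_coordinate[OF i] C]
  have E: "{\<omega> \<in> space M. (fst \<omega> i, snd \<omega>) \<in> C} \<in> sets M"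
    unfolding M_def by (simp add: vimage_def Int_def conj_commute)
  have slice: "(\<lambda>x. (x, y)) -` {\<omega> \<in> space M. (fst \<omega> i, snd \<omega>) \<in> C}
      = {x \<in> space (PiM I (\<lambda>_. M1)). x i \<in> (\<lambda>a. (a, y)) -` C}" if "y \<in> space M2" for y
    using that unfolding M_def by (auto simp: space_pair_measure)
  have "emeasure M {\<omega> \<in> space M. (fst \<omega> i, snd \<omega>) \<in> C}
      = (\<integral>\<^sup>+y. emeasure (PiM I (\<lambda>_. M1))
            ((\<lambda>x. (x, y)) -` {\<omega> \<in> space M. (fst \<omega> i, snd \<omega>) \<in> C}) \<partial>M2)"
    using E unfolding M_def by (rule PM.emeasure_pair_measure_alt2)
  also have "\<dots> = (\<integral>\<^sup>+y. emeasure M1 ((\<lambda>a. (a, y)) -` C) \<partial>M2)"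
    using slice P.emeasure_PiM_Collect_single[OF i sets_Pair2[OF C]]
    by (intro nn_integral_cong) simp
  also have "\<dots> \<le> (\<integral>\<^sup>+y. q \<partial>M2)"
    using bound by (rule nn_integral_mono_AE)
  also have "\<dots> = q"
    using M2 by (simp add: prob_space.emeasure_space_1)
  finally show ?thesis .
qed

text \<open>For \<open>t \<le> log 2\<close> the right-hand side is at least \<open>1\<close>; otherwise \<open>t \<ge> 2/3\<close>, and then
  \<open>log N + t \<le> (3/2) (t log N + t\<^sup>2)\<close>.\<close>

lemma min_union_tail_le:
  fixes N t :: real
  assumes N: "1 \<le> N" and t: "0 < t"
  shows "min 1 (N * exp (-(3/2) * (t * ln N + t\<^sup>2))) \<le> 2 * exp (- t)"
proof (cases "t \<le> ln 2")
  case True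
  then have "exp (- ln 2) \<le> exp (- t)" by simp
  then have "1 \<le> 2 * exp (- t)" by (simp add: exp_minus)
  then show ?thesis by linarith
next
  case False
  then have t23: "2/3 \<le> t" using ln2_ge_two_thirds by linarith
  have lnN: "0 \<le> ln N" using N by simp
  have "N * exp (-(3/2) * (t * ln N + t\<^sup>2)) = exp (ln N + -(3/2) * (t * ln N + t\<^sup>2))"
    by (subst exp_add) (use N in simp)
  also have "\<dots> \<le> exp (- t)"
  proof (rule exp_mono)
    have "ln N * (1 - 3/2 * t) \<le> 0" "t * (1 - 3/2 * t) \<le> 0"
      using lnN t t23 by (auto intro: mult_nonneg_nonpos)
    then show "ln N + -(3/2) * (t * ln N + t\<^sup>2) \<le> - t"
      by (simp add: algebra_simps power2_eq_square)
  qed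
  also have "\<dots> \<le> 2 * exp (- t)"
    by simp
  finally show ?thesis
    by (simp add: min_le_iff_disj)
qed

theorem lemma1:
  fixes \<Sigma> :: "real^'d2^'d1" and t :: real
  assumes "t > 0"
  defines "M \<equiv> (PiM (UNIV :: 'n::finite set) (\<lambda>_. (uniform_sphere :: (real^'d1) measure)))
                  \<Otimes>\<^sub>M (uniform_sphere :: (real^'d2) measure)"
  shows "measure M {\<omega> \<in> space M. \<forall>i. fst \<omega> i \<bullet> (\<Sigma> *v snd \<omega>)
            \<le> 2 * sqrt (t * ln (real CARD('n)) + t^2) * frob_norm \<Sigma> / sqrt (real CARD('d1))}
         \<ge> 1 - 2 * exp (- t)"
proof -
  define N where "N = real CARD('n)"
  define K where "K = t * ln N + t\<^sup>2"
  define B where "B = 2 * sqrt K * frob_norm \<Sigma> / sqrt (real CARD('d1))"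
  define q where "q = exp (-(3/2) * K)"
  define C where "C = {p. B < fst p \<bullet> (\<Sigma> *v snd p)}"
  define E where "E i = {\<omega> \<in> space M. (fst \<omega> i, snd \<omega>) \<in> C}" for i
  have N: "1 \<le> N" unfolding N_def by simp
  have K: "0 \<le> K" unfolding K_def using N \<open>t > 0\<close> by simp
  have C: "C \<in> sets (uniform_sphere \<Otimes>\<^sub>M (uniform_sphere :: (real^'d2) measure))"
  proof -
    have "{p \<in> space (uniform_sphere \<Otimes>\<^sub>M uniform_sphere). B < fst p \<bullet> (\<Sigma> *v snd p)}
        \<in> sets (uniform_sphere \<Otimes>\<^sub>M (uniform_sphere :: (real^'d2) measure))"
      by measurable
    then show ?thesis
      by (simp add: C_def space_pair_measure)
  qed
  interpret prob_space M
    unfolding M_def by (intro prob_space_pair prob_space_PiM prob_space_uniform_sphere)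
  have E: "E i \<in> events" for i
    using measurable_sets[OF measurable_PiM_pair_coordinate C, of i UNIV]
    unfolding E_def M_def by (simp add: vimage_def Int_def conj_commute)
  have "emeasure M (E i) \<le> q" for i
    unfolding E_def M_def
  proof (rule emeasure_PiM_pair_coordinate_le[OF prob_space_uniform_sphere prob_space_uniform_sphere _ C])
    show "AE y in uniform_sphere. emeasure uniform_sphere ((\<lambda>a. (a, y)) -` C) \<le> ennreal q"
      using AE_uniform_sphere_norm_le_1
    proof eventually_elim
      case (elim y)
      have "norm (\<Sigma> *v y) \<le> frob_norm \<Sigma> * norm y"
        by (rule norm_matrix_vector_mult_le_frob_norm)
      also have "\<dots> \<le> frob_norm \<Sigma>"
        using elim frob_norm_nonneg[of \<Sigma>] by (simp add: mult_left_le)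
      finally show ?case
        using emeasure_uniform_sphere_inner_gt_le[of "\<Sigma> *v y" "frob_norm \<Sigma>" K] K
        unfolding C_def B_def q_def by simp
    qed
  qed simp
  then have prob_E: "measure M (E i) \<le> q" for i
    by (simp add: emeasure_eq_measure q_def)
  have "measure M (\<Union>i. E i) \<le> (\<Sum>i\<in>UNIV. measure M (E i))"
    using E by (intro finite_measure_subadditive_finite) auto
  also have "\<dots> \<le> (\<Sum>i\<in>(UNIV::'n set). q)"
    by (rule sum_mono) (rule prob_E)
  also have "\<dots> = N * q"
    by (simp add: N_def)
  finally have "measure M (\<Union>i. E i) \<le> min 1 (N * q)"
    by (simp add: measure_le_1)
  then have "1 - 2 * exp (- t) \<le> 1 - measure M (\<Union>i. E i)"
    using min_union_tail_le[OF N \<open>t > 0\<close>] unfolding q_def K_def by linarith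
  also have "\<dots> = measure M (space M - (\<Union>i. E i))"
    using E by (intro prob_compl[symmetric]) auto
  also have "space M - (\<Union>i. E i) = {\<omega> \<in> space M. \<forall>i. fst \<omega> i \<bullet> (\<Sigma> *v snd \<omega>) \<le> B}"
    unfolding E_def C_def by (auto simp: not_less) (meson not_le)
  finally show ?thesis
    unfolding B_def K_def N_def .
qed

end
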